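(* Let $G$ be an \{ISK4,wheel\}-free trigraph. Then $G$ admits a clique-cutset or a stable 2-cutset if and only if $G$ admits a good cut-partition.
   Context: A trigraph $G$ consists of a finite vertex set $V(G)$ and an adjacency function $\theta_G:\binom{V(G)}{2}\to\{-1,0,1\}$; for distinct $u,v$ write $uv$ for $\{u,v\}$. The pair $uv$ is strongly adjacent if $\theta_G(uv)=1$, semi-adjacent if $\theta_G(uv)=0$, strongly anti-adjacent if $\theta_G(uv)=-1$; $u,v$ are adjacent if $\theta_G(uv)\ge 0$ and anti-adjacent if $\theta_G(uv)\le 0$. For $X\subseteq V(G)$, $G[X]$ is the trigraph on $X$ with the restricted adjacency function, and $G\setminus X=G[V(G)\setminus X]$. A realization of $G$ is a graph on $V(G)$ obtained by turning each semi-adjacent pair into either an edge or a non-edge (strongly adjacent pairs are edges, strongly anti-adjacent pairs non-edges); the full realization turns all semi-adjacent pairs into edges. A stable set is a set of pairwise anti-adjacent vertices; a strong clique is a set of pairwise strongly adjacent vertices. $G$ is connected if its full realization is connected. A narrow path in $G$ between $a$ and $b$ is an induced subtrigraph whose full realization is a path with endpoints $a$ and $b$. An ISK4 is a graph isomorphic to a subdivision of $K_4$. A wheel is a graph consisting of a chordless cycle of length at least four together with a vertex having at least three neighbors on the cycle. A trigraph is \{ISK4,wheel\}-free if none of its realizations has an induced subgraph that is an ISK4 or a wheel. A cut-partition of $G$ is a partition $(A,B,C)$ of $V(G)$ with $A,B$ non-empty ($C$ possibly empty) such that every vertex of $A$ is strongly anti-adjacent to every vertex of $B$. A clique-cutset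 is a (possibly empty) strong clique $C$ with $G\setminus C$ disconnected; a stable 2-cutset is a stable set $C$ of size two with $G\setminus C$ disconnected. A good cut-partition is a cut-partition $(A,B,C)$ such that either $C$ is a clique-cutset with $|C|\le 3$ (type clique), or $C$ is a stable 2-cutset and each of $G[A\cup C]$ and $G[B\cup C]$ contains a narrow path between the two vertices of $C$ (type stable). *)

theory Defs
  imports Main
begin

definition trigraph :: "'a set \<Rightarrow> ('a set \<Rightarrow> int) \<Rightarrow> bool" where
  "trigraph V \<theta> \<longleftrightarrow> finite V \<and>
     (\<forall>u\<in>V. \<forall>v\<in>V. u \<noteq> v \<longrightarrow> \<theta> {u,v} \<in> {-1, 0, 1})"

definition realization :: "'a set \<Rightarrow> ('a set \<Rightarrow> int) \<Rightarrow> 'a set set \<Rightarrow> bool" where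
  "realization V \<theta> E \<longleftrightarrow>
     E \<subseteq> {{u,v} | u v. u \<in> V \<and> v \<in> V \<and> u \<noteq> v} \<and>
     (\<forall>u\<in>V. \<forall>v\<in>V. u \<noteq> v \<longrightarrow>
        (\<theta> {u,v} = 1 \<longrightarrow> {u,v} \<in> E) \<and> (\<theta> {u,v} = -1 \<longrightarrow> {u,v} \<notin> E))"

definition induced_edges :: "'a set set \<Rightarrow> 'a set \<Rightarrow> 'a set set" where
  "induced_edges E X = {e \<in> E. e \<subseteq> X}"

definition path_edges :: "'a list \<Rightarrow> 'a set set" where
  "path_edges p = {{p ! k, p ! Suc k} | k. Suc k < length p}"

definition cycle_edges :: "'a list \<Rightarrow> 'a set set" where
  "cycle_edges c = {{c ! k, c ! ((Suc k) mod length c)} | k. k < length c}"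

text \<open>The graph (W,F) is a subdivision of K4: four distinct branch vertices b 0..b 3,
  and for each pair i<j a path P i j from b i to b j, the paths being internally
  vertex-disjoint and avoiding the other branch vertices; W and F are exactly
  the vertices and edges of these paths.\<close>

definition is_isk4 :: "'a set \<Rightarrow> 'a set set \<Rightarrow> bool" where
  "is_isk4 W F \<longleftrightarrow> (\<exists>(b :: nat \<Rightarrow> 'a) (P :: nat \<Rightarrow> nat \<Rightarrow> 'a list).
     inj_on b {..<4} \<and>
     (\<forall>i j. i < j \<and> j < 4 \<longrightarrow>
        distinct (P i j) \<and> 2 \<le> length (P i j) \<and>
        hd (P i j) = b i \<and> last (P i j) = b j \<and>
        set (P i j) \<inter> b ` {..<4} = {b i, b j}) \<and>
     (\<forall>i j k l. i < j \<and> j < 4 \<and> k < l \<and> l < 4 \<and> (i, j) \<noteq> (k, l) \<longrightarrow>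
        set (P i j) \<inter> set (P k l) \<subseteq> b ` {..<4}) \<and>
     W = (\<Union>{set (P i j) | i j. i < j \<and> j < 4}) \<and>
     F = (\<Union>{path_edges (P i j) | i j. i < j \<and> j < 4}))"

definition is_wheel :: "'a set \<Rightarrow> 'a set set \<Rightarrow> bool" where
  "is_wheel W F \<longleftrightarrow> (\<exists>c x N.
     distinct c \<and> 4 \<le> length c \<and> x \<notin> set c \<and>
     N \<subseteq> set c \<and> 3 \<le> card N \<and>
     W = insert x (set c) \<and>
     F = cycle_edges c \<union> {{x, y} | y. y \<in> N})"

definition isk4_wheel_free :: "'a set \<Rightarrow> ('a set \<Rightarrow> int) \<Rightarrow> bool" where
  "isk4_wheel_free V \<theta> \<longleftrightarrow>
     (\<forall>E X. realization V \<theta> E \<and> X \<subseteq> V \<longrightarrow>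
        \<not> is_isk4 X (induced_edges E X) \<and> \<not> is_wheel X (induced_edges E X))"

text \<open>Connectivity of the full realization of G[S].\<close>

definition adjacent :: "('a set \<Rightarrow> int) \<Rightarrow> 'a \<Rightarrow> 'a \<Rightarrow> bool" where
  "adjacent \<theta> u v \<longleftrightarrow> u \<noteq> v \<and> \<theta> {u,v} \<ge> 0"

definition connected_sub :: "('a set \<Rightarrow> int) \<Rightarrow> 'a set \<Rightarrow> bool" where
  "connected_sub \<theta> S \<longleftrightarrow>
     (\<forall>u\<in>S. \<forall>v\<in>S. (\<lambda>x y. x \<in> S \<and> y \<in> S \<and> adjacent \<theta> x y)\<^sup>*\<^sup>* u v)"

definition strong_clique :: "'a set \<Rightarrow> ('a set \<Rightarrow> int) \<Rightarrow> 'a set \<Rightarrow> bool" where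
  "strong_clique V \<theta> C \<longleftrightarrow> C \<subseteq> V \<and> (\<forall>u\<in>C. \<forall>v\<in>C. u \<noteq> v \<longrightarrow> \<theta> {u,v} = 1)"

definition stable_set :: "'a set \<Rightarrow> ('a set \<Rightarrow> int) \<Rightarrow> 'a set \<Rightarrow> bool" where
  "stable_set V \<theta> C \<longleftrightarrow> C \<subseteq> V \<and> (\<forall>u\<in>C. \<forall>v\<in>C. u \<noteq> v \<longrightarrow> \<theta> {u,v} \<le> 0)"

definition clique_cutset :: "'a set \<Rightarrow> ('a set \<Rightarrow> int) \<Rightarrow> 'a set \<Rightarrow> bool" where
  "clique_cutset V \<theta> C \<longleftrightarrow> strong_clique V \<theta> C \<and> \<not> connected_sub \<theta> (V - C)"

definition stable_2cutset :: "'a set \<Rightarrow> ('a set \<Rightarrow> int) \<Rightarrow> 'a set \<Rightarrow> bool" where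
  "stable_2cutset V \<theta> C \<longleftrightarrow> stable_set V \<theta> C \<and> card C = 2 \<and> \<not> connected_sub \<theta> (V - C)"

definition cut_partition :: "'a set \<Rightarrow> ('a set \<Rightarrow> int) \<Rightarrow> 'a set \<Rightarrow> 'a set \<Rightarrow> 'a set \<Rightarrow> bool" where
  "cut_partition V \<theta> A B C \<longleftrightarrow>
     A \<union> B \<union> C = V \<and> A \<inter> B = {} \<and> A \<inter> C = {} \<and> B \<inter> C = {} \<and>
     A \<noteq> {} \<and> B \<noteq> {} \<and> (\<forall>a\<in>A. \<forall>b\<in>B. \<theta> {a,b} = -1)"

text \<open>A narrow path between a and b in G[Y]: an induced subtrigraph G[set p], set p \<subseteq> Y,
  whose full realization is the path p from a to b.\<close>

definition narrow_path :: "('a set \<Rightarrow> int) \<Rightarrow> 'a set \<Rightarrow> 'a \<Rightarrow> 'a \<Rightarrow> bool" where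
  "narrow_path \<theta> Y a b \<longleftrightarrow> (\<exists>p. distinct p \<and> p \<noteq> [] \<and> hd p = a \<and> last p = b \<and> set p \<subseteq> Y \<and>
     (\<forall>i<length p. \<forall>j<length p. i \<noteq> j \<longrightarrow>
        (\<theta> {p ! i, p ! j} \<ge> 0 \<longleftrightarrow> (i = Suc j \<or> j = Suc i))))"

definition good_cut_partition :: "'a set \<Rightarrow> ('a set \<Rightarrow> int) \<Rightarrow> 'a set \<Rightarrow> 'a set \<Rightarrow> 'a set \<Rightarrow> bool" where
  "good_cut_partition V \<theta> A B C \<longleftrightarrow> cut_partition V \<theta> A B C \<and>
     ((clique_cutset V \<theta> C \<and> card C \<le> 3) \<or>
      (stable_2cutset V \<theta> C \<and>
        (\<exists>a b. C = {a, b} \<and> narrow_path \<theta> (A \<union> C) a b \<and> narrow_path \<theta> (B \<union> C) a b)))"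

end

theory Submission
  imports Defs
begin

text \<open>For a stable
  2-cutset {a,b}, take two components D, D' of G \<setminus> {a,b}. If one of them contains no
  neighbour of a, say, then the single vertex b is a clique cutset separating it from a.
  Otherwise both D and D' contain neighbours of a and of b, so there are a-b walks through D
  and through the side of the partition containing D', and shortest such walks are narrow
  paths.\<close>

lemma successively_take: "successively P xs \<Longrightarrow> successively P (take n xs)"
  by (metis append_take_drop_id successively_append_iff)

lemma successively_drop: "successively P xs \<Longrightarrow> successively P (drop n xs)"
  by (metis append_take_drop_id successively_append_iff)

subsection \<open>Connectivity inside a vertex set\<close>

lemma adjacent_sym: "adjacent \<theta> x y \<longleftrightarrow> adjacent \<theta> y x"
  unfolding adjacent_def by (auto simp: insert_commute)

lemma trigraph_not_adjacent:
  "trigraph V \<theta> \<Longrightarrow> x \<in> V \<Longrightarrow> y \<in> V \<Longrightarrow> x \<noteq> y \<Longrightarrow> \<not> adjacent \<theta> x y \<Longrightarrow> \<theta> {x,y} = -1"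
  unfolding trigraph_def adjacent_def by force

definition adjacent_within :: "('a set \<Rightarrow> int) \<Rightarrow> 'a set \<Rightarrow> 'a \<Rightarrow> 'a \<Rightarrow> bool" where
  "adjacent_within \<theta> S = (\<lambda>x y. x \<in> S \<and> y \<in> S \<and> adjacent \<theta> x y)"

lemma connected_sub_iff:
  "connected_sub \<theta> S \<longleftrightarrow> (\<forall>u\<in>S. \<forall>v\<in>S. (adjacent_within \<theta> S)\<^sup>*\<^sup>* u v)"
  unfolding connected_sub_def adjacent_within_def ..

lemma adjacent_within_rtranclp_sym:
  "(adjacent_within \<theta> S)\<^sup>*\<^sup>* x y \<Longrightarrow> (adjacent_within \<theta> S)\<^sup>*\<^sup>* y x"
proof -
  have "symp (adjacent_within \<theta> S)"
    unfolding adjacent_within_def by (auto intro: sympI simp: adjacent_sym)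
  then show "(adjacent_within \<theta> S)\<^sup>*\<^sup>* x y \<Longrightarrow> (adjacent_within \<theta> S)\<^sup>*\<^sup>* y x"
    by (meson symp_rtranclp sympD)
qed

lemma adjacent_within_rtranclp_mono:
  assumes "S \<subseteq> T" "(adjacent_within \<theta> S)\<^sup>*\<^sup>* x y"
  shows "(adjacent_within \<theta> T)\<^sup>*\<^sup>* x y"
proof -
  have "adjacent_within \<theta> S \<le> adjacent_within \<theta> T"
    using assms(1) unfolding adjacent_within_def by auto
  then show ?thesis using assms(2) rtranclp_mono by blast
qed

lemma adjacent_within_rtranclp_closed:
  assumes "(adjacent_within \<theta> S)\<^sup>*\<^sup>* x y" "x \<in> A"
    and "\<forall>v\<in>A. \<forall>w\<in>S - A. \<not> adjacent \<theta> v w"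
  shows "y \<in> A"
  using assms by (induction rule: rtranclp_induct) (auto simp: adjacent_within_def)

definition component :: "('a set \<Rightarrow> int) \<Rightarrow> 'a set \<Rightarrow> 'a \<Rightarrow> 'a set" where
  "component \<theta> S u = {v. (adjacent_within \<theta> S)\<^sup>*\<^sup>* u v}"

lemma component_self: "u \<in> component \<theta> S u"
  unfolding component_def by simp

lemma component_subset: "u \<in> S \<Longrightarrow> component \<theta> S u \<subseteq> S"
  unfolding component_def
  by (auto elim: rtranclp_induct simp: adjacent_within_def)

lemma component_closed:
  assumes "u \<in> S" "x \<in> component \<theta> S u" "y \<in> S" "adjacent \<theta> x y"
  shows "y \<in> component \<theta> S u"
proof -
  have "x \<in> S" using component_subset[OF assms(1)] assms(2) by blast
  then have "adjacent_within \<theta> S x y"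
    using assms(3,4) unfolding adjacent_within_def by simp
  moreover have "(adjacent_within \<theta> S)\<^sup>*\<^sup>* u x"
    using assms(2) unfolding component_def by simp
  ultimately show ?thesis
    unfolding component_def by (simp add: rtranclp.rtrancl_into_rtrancl)
qed

lemma components_disjoint:
  assumes "\<not> (adjacent_within \<theta> S)\<^sup>*\<^sup>* u w"
  shows "component \<theta> S u \<inter> component \<theta> S w = {}"
  using assms adjacent_within_rtranclp_sym rtranclp_trans unfolding component_def by fast

lemma rtranclp_adjacent_within_component:
  "(adjacent_within \<theta> S)\<^sup>*\<^sup>* u x \<Longrightarrow> (adjacent_within \<theta> (component \<theta> S u))\<^sup>*\<^sup>* u x"
proof (induction rule: rtranclp_induct)
  case (step y z)
  then have "adjacent_within \<theta> (component \<theta> S u) y z"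
    unfolding component_def adjacent_within_def by (auto intro: rtranclp.rtrancl_into_rtrancl)
  then show ?case using step.IH by (meson rtranclp.rtrancl_into_rtrancl)
qed simp

lemma connected_component: "connected_sub \<theta> (component \<theta> S u)"
  unfolding connected_sub_iff
proof (intro ballI)
  fix x y assume "x \<in> component \<theta> S u" "y \<in> component \<theta> S u"
  then have "(adjacent_within \<theta> (component \<theta> S u))\<^sup>*\<^sup>* u x"
    "(adjacent_within \<theta> (component \<theta> S u))\<^sup>*\<^sup>* u y"
    using rtranclp_adjacent_within_component[of \<theta> S u] unfolding component_def by auto
  then show "(adjacent_within \<theta> (component \<theta> S u))\<^sup>*\<^sup>* x y"
    by (meson adjacent_within_rtranclp_sym rtranclp_trans)
qed

lemma connected_sub_link:
  assumes "connected_sub \<theta> K" "K \<subseteq> Y" "a \<in> Y" "b \<in> Y" "x \<in> K" "y \<in> K"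
    and "adjacent \<theta> a x" "adjacent \<theta> b y"
  shows "(adjacent_within \<theta> Y)\<^sup>*\<^sup>* a b"
proof -
  have "(adjacent_within \<theta> Y)\<^sup>*\<^sup>* x y"
    using assms(1,2,5,6) adjacent_within_rtranclp_mono unfolding connected_sub_iff by metis
  moreover have "adjacent_within \<theta> Y a x" "adjacent_within \<theta> Y y b"
    using assms by (auto simp: adjacent_within_def adjacent_sym)
  ultimately show ?thesis
    by (meson converse_rtranclp_into_rtranclp rtranclp.rtrancl_into_rtrancl)
qed

subsection \<open>Shortest walks are narrow paths\<close>

definition walk :: "('a set \<Rightarrow> int) \<Rightarrow> 'a set \<Rightarrow> 'a list \<Rightarrow> bool" where
  "walk \<theta> Y p \<longleftrightarrow> p \<noteq> [] \<and> set p \<subseteq> Y \<and> successively (adjacent \<theta>) p"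

lemma rtranclp_adjacent_within_imp_walk:
  "(adjacent_within \<theta> Y)\<^sup>*\<^sup>* a b \<Longrightarrow> b \<in> Y \<Longrightarrow> \<exists>p. walk \<theta> Y p \<and> hd p = a \<and> last p = b"
proof (induction rule: converse_rtranclp_induct)
  case base
  then show ?case by (intro exI[of _ "[b]"]) (simp add: walk_def)
next
  case (step y z)
  then obtain p where "walk \<theta> Y p" "hd p = z" "last p = b" by blast
  then show ?case using step.hyps(1)
    by (intro exI[of _ "y # p"]) (auto simp: walk_def successively_Cons adjacent_within_def)
qed

lemma walk_skip_loop:
  assumes p: "walk \<theta> Y p" and ij: "i < j" "j < length p" "p ! i = p ! j"
  shows "walk \<theta> Y (take i p @ drop j p)"
proof -
  have "adjacent \<theta> (last (take i p)) (hd (drop j p))" if "i > 0"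
    using successively_nth[of "adjacent \<theta>" p "i - 1"] p ij that
    by (simp add: walk_def last_conv_nth hd_drop_conv_nth)
  moreover have "set (take i p) \<subseteq> Y" "set (drop j p) \<subseteq> Y"
    using p set_take_subset set_drop_subset unfolding walk_def by fast+
  ultimately show ?thesis
    using p ij unfolding walk_def
    by (auto simp: successively_append_iff successively_take successively_drop)
qed

lemma walk_skip_chord:
  assumes p: "walk \<theta> Y p" and ij: "i < j" "j < length p" "adjacent \<theta> (p ! i) (p ! j)"
  shows "walk \<theta> Y (take (Suc i) p @ drop j p)"
proof -
  have "adjacent \<theta> (last (take (Suc i) p)) (hd (drop j p))"
    using ij by (simp add: take_Suc_conv_app_nth hd_drop_conv_nth)
  moreover have "set (take (Suc i) p) \<subseteq> Y" "set (drop j p) \<subseteq> Y"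
    using p set_take_subset set_drop_subset unfolding walk_def by fast+
  ultimately show ?thesis
    using p ij unfolding walk_def
    by (auto simp: successively_append_iff successively_take successively_drop)
qed

lemma narrow_pathI:
  assumes p: "walk \<theta> Y p" "distinct p"
    and chordless: "\<And>i j. Suc i < j \<Longrightarrow> j < length p \<Longrightarrow> \<not> adjacent \<theta> (p ! i) (p ! j)"
  shows "narrow_path \<theta> Y (hd p) (last p)"
  unfolding narrow_path_def
proof (intro exI[of _ p] conjI allI impI)
  fix i j assume ij: "i < length p" "j < length p" "i \<noteq> j"
  then have "p ! i \<noteq> p ! j" using p(2) by (simp add: nth_eq_iff_index_eq)
  then have "0 \<le> \<theta> {p ! i, p ! j} \<longleftrightarrow> adjacent \<theta> (p ! i) (p ! j)"
    by (simp add: adjacent_def)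
  also have "\<dots> \<longleftrightarrow> i = Suc j \<or> j = Suc i"
  proof
    assume "adjacent \<theta> (p ! i) (p ! j)"
    moreover have "Suc i < j \<or> Suc j < i" if "\<not> (i = Suc j \<or> j = Suc i)"
      using that ij(3) by linarith
    ultimately show "i = Suc j \<or> j = Suc i"
      using chordless[of i j] chordless[of j i] ij adjacent_sym[of \<theta> "p ! i" "p ! j"] by blast
  next
    assume "i = Suc j \<or> j = Suc i"
    then show "adjacent \<theta> (p ! i) (p ! j)"
      using successively_nth[of "adjacent \<theta>" p] p(1) ij adjacent_sym[of \<theta> "p ! i" "p ! j"]
      unfolding walk_def by auto
  qed
  finally show "0 \<le> \<theta> {p ! i, p ! j} \<longleftrightarrow> i = Suc j \<or> j = Suc i" .
qed (use p in \<open>auto simp: walk_def\<close>)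

lemma walk_imp_narrow_path:
  assumes "walk \<theta> Y p"
  shows "narrow_path \<theta> Y (hd p) (last p)"
proof -
  obtain q where q: "walk \<theta> Y q" "hd q = hd p" "last q = last p"
    and shortest: "\<And>r. walk \<theta> Y r \<Longrightarrow> hd r = hd p \<Longrightarrow> last r = last p \<Longrightarrow> length q \<le> length r"
    using ex_has_least_nat[of "\<lambda>q. walk \<theta> Y q \<and> hd q = hd p \<and> last q = last p" p length] assms
    by blast
  have "distinct q"
  proof (rule ccontr)
    assume "\<not> distinct q"
    then obtain i j where ij: "i < j" "j < length q" "q ! i = q ! j"
      by (metis distinct_conv_nth nat_neq_iff)
    let ?r = "take i q @ drop j q"
    have "hd ?r = hd q"
    proof (cases "i = 0")
      case True
      have "hd (drop j q) = q ! 0" using ij True by (simp add: hd_drop_conv_nth)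
      moreover have "q \<noteq> []" using ij(2) by auto
      ultimately show ?thesis using True by (simp add: hd_conv_nth)
    qed (use ij in \<open>simp add: hd_append\<close>)
    then show False
      using shortest[of ?r] walk_skip_loop[OF q(1) ij] ij q by simp
  qed
  moreover have "\<not> adjacent \<theta> (q ! i) (q ! j)" if ij: "Suc i < j" "j < length q" for i j
  proof
    assume "adjacent \<theta> (q ! i) (q ! j)"
    moreover have "q \<noteq> []" using ij by auto
    ultimately show False
      using shortest[of "take (Suc i) q @ drop j q"] walk_skip_chord[of \<theta> Y q i j] q ij
      by (simp add: hd_append)
  qed
  ultimately show ?thesis using narrow_pathI q by metis
qed

lemma rtranclp_adjacent_within_imp_narrow_path:
  "(adjacent_within \<theta> Y)\<^sup>*\<^sup>* a b \<Longrightarrow> b \<in> Y \<Longrightarrow> narrow_path \<theta> Y a b"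
  using rtranclp_adjacent_within_imp_walk walk_imp_narrow_path by metis

lemma cut_partition_not_connected:
  assumes "cut_partition V \<theta> A B C"
  shows "\<not> connected_sub \<theta> (V - C)"
proof
  assume connected: "connected_sub \<theta> (V - C)"
  obtain a b where ab: "a \<in> A" "b \<in> B" "a \<in> V - C" "b \<in> V - C"
    using assms unfolding cut_partition_def by blast
  have "\<forall>v\<in>A. \<forall>w\<in>V - C - A. \<not> adjacent \<theta> v w"
    using assms unfolding cut_partition_def adjacent_def by fastforce
  then have "b \<in> A"
    using adjacent_within_rtranclp_closed connected ab unfolding connected_sub_iff by metis
  then show False using ab assms unfolding cut_partition_def by blast
qed

lemma cut_partition_of_closed:
  assumes "trigraph V \<theta>" "C \<subseteq> V" "A \<subseteq> V - C" "A \<noteq> {}" "V - C - A \<noteq> {}"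
    and closed: "\<forall>x\<in>A. \<forall>y\<in>V - C - A. \<not> adjacent \<theta> x y"
  shows "cut_partition V \<theta> A (V - C - A) C"
proof -
  have "\<theta> {x, y} = -1" if "x \<in> A" "y \<in> V - C - A" for x y
    using trigraph_not_adjacent[OF assms(1)] closed that assms(3) by blast
  then show ?thesis using assms unfolding cut_partition_def by auto
qed

lemma component_cut_partition:
  assumes "trigraph V \<theta>" "C \<subseteq> V" "u \<in> V - C" "w \<in> V - C"
    and "\<not> (adjacent_within \<theta> (V - C))\<^sup>*\<^sup>* u w"
  shows "cut_partition V \<theta> (component \<theta> (V - C) u) (V - C - component \<theta> (V - C) u) C"
proof (rule cut_partition_of_closed)
  show "component \<theta> (V - C) u \<subseteq> V - C" using assms(3) by (rule component_subset)
  show "component \<theta> (V - C) u \<noteq> {}" using component_self by fast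
  show "V - C - component \<theta> (V - C) u \<noteq> {}"
    using assms(4,5) unfolding component_def by blast
  show "\<forall>x\<in>component \<theta> (V - C) u. \<forall>y\<in>V - C - component \<theta> (V - C) u. \<not> adjacent \<theta> x y"
    using component_closed[OF assms(3)] by blast
qed (use assms in auto)

lemma good_cut_partition_of_clique:
  "cut_partition V \<theta> A B C \<Longrightarrow> strong_clique V \<theta> C \<Longrightarrow> card C \<le> 3 \<Longrightarrow>
    good_cut_partition V \<theta> A B C"
  unfolding good_cut_partition_def clique_cutset_def
  using cut_partition_not_connected by blast

lemma good_cut_partition_of_unattached_component:
  assumes "trigraph V \<theta>" "a \<in> V" "b \<in> V" "a \<noteq> b" "u \<in> V - {a, b}"
    and unattached: "\<forall>x\<in>component \<theta> (V - {a, b}) u. \<not> adjacent \<theta> a x"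
  shows "\<exists>A B. good_cut_partition V \<theta> A B {b}"
proof -
  define K where "K = component \<theta> (V - {a, b}) u"
  have K: "K \<subseteq> V - {a, b}" "u \<in> K"
    unfolding K_def using component_subset[OF assms(5)] component_self by auto
  have "\<not> adjacent \<theta> x y" if "x \<in> K" "y \<in> V - {b} - K" for x y
  proof (cases "y = a")
    case True
    then show ?thesis using unattached that adjacent_sym unfolding K_def by metis
  next
    case False
    then show ?thesis using component_closed[OF assms(5)] that unfolding K_def by blast
  qed
  then have "cut_partition V \<theta> K (V - {b} - K) {b}"
    using assms K by (intro cut_partition_of_closed) auto
  moreover have "strong_clique V \<theta> {b}" using assms(3) unfolding strong_clique_def by simp
  ultimately show ?thesis using good_cut_partition_of_clique by fastforce
qed

subsection \<open>Strong cliques have at most three vertices\<close>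

definition full_realization :: "'a set \<Rightarrow> ('a set \<Rightarrow> int) \<Rightarrow> 'a set set" where
  "full_realization V \<theta> = {{u, v} | u v. u \<in> V \<and> v \<in> V \<and> adjacent \<theta> u v}"

lemma realization_full_realization: "realization V \<theta> (full_realization V \<theta>)"
  unfolding realization_def full_realization_def adjacent_def
proof (intro conjI ballI impI)
  fix u v assume "u \<in> V" "v \<in> V" "u \<noteq> v" "\<theta> {u, v} = 1"
  then show "{u, v} \<in> {{u, v} |u v. u \<in> V \<and> v \<in> V \<and> u \<noteq> v \<and> 0 \<le> \<theta> {u, v}}" by force
next
  fix u v assume "\<theta> {u, v} = -1"
  then show "{u, v} \<notin> {{u, v} |u v. u \<in> V \<and> v \<in> V \<and> u \<noteq> v \<and> 0 \<le> \<theta> {u, v}}"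
    by (auto simp: doubleton_eq_iff insert_commute)
qed auto

lemma induced_edges_full_realization_strong_clique:
  assumes "strong_clique V \<theta> X"
  shows "induced_edges (full_realization V \<theta>) X = {{x, y} | x y. x \<in> X \<and> y \<in> X \<and> x \<noteq> y}"
proof (intro equalityI subsetI)
  fix e assume "e \<in> induced_edges (full_realization V \<theta>) X"
  then obtain x y where "e = {x, y}" "x \<noteq> y" "x \<in> X" "y \<in> X"
    unfolding induced_edges_def full_realization_def adjacent_def by auto
  then show "e \<in> {{x, y} | x y. x \<in> X \<and> y \<in> X \<and> x \<noteq> y}" by blast
next
  fix e assume "e \<in> {{x, y} | x y. x \<in> X \<and> y \<in> X \<and> x \<noteq> y}"
  then obtain x y where e: "e = {x, y}" "x \<noteq> y" "x \<in> X" "y \<in> X" by blast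
  then have "x \<in> V" "y \<in> V" "adjacent \<theta> x y"
    using assms unfolding strong_clique_def adjacent_def by auto
  then show "e \<in> induced_edges (full_realization V \<theta>) X"
    using e unfolding induced_edges_def full_realization_def by blast
qed

lemma complete_graph_is_isk4:
  assumes "card X = 4"
  shows "is_isk4 X {{x, y} | x y. x \<in> X \<and> y \<in> X \<and> x \<noteq> y}"
proof -
  have "finite X" using assms card.infinite by fastforce
  then obtain b :: "nat \<Rightarrow> 'a" where "bij_betw b {..<4} X"
    using ex_bij_betw_nat_finite[of X] assms by (auto simp: atLeast0LessThan)
  then have inj: "inj_on b {..<4}" and X: "X = b ` {..<4}"
    by (auto simp: bij_betw_def)
  have b_neq: "b i \<noteq> b j" if "i < 4" "j < 4" "i \<noteq> j" for i j
    using inj that by (auto dest: inj_onD)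
  have vertices: "X = \<Union> {set [b i, b j] | i j. i < j \<and> j < 4}"
  proof (intro equalityI subsetI)
    fix x assume "x \<in> X"
    then obtain k where k: "x = b k" "k < 4" unfolding X by auto
    define l where "l = (if k = 0 then 1 else k)"
    have "0 < l" "l < (4::nat)" using k unfolding l_def by auto
    then have "set [b 0, b l] \<in> {set [b i, b j] | i j. i < j \<and> j < 4}" by blast
    moreover have "x \<in> set [b 0, b l]" using k unfolding l_def by auto
    ultimately show "x \<in> \<Union> {set [b i, b j] | i j. i < j \<and> j < 4}" by (rule UnionI)
  next
    fix x assume "x \<in> \<Union> {set [b i, b j] | i j. i < j \<and> j < 4}"
    then obtain i j where "x \<in> set [b i, b j]" "i < j" "j < 4" by blast
    then show "x \<in> X" unfolding X by auto
  qed
  have "{{x, y} | x y. x \<in> X \<and> y \<in> X \<and> x \<noteq> y} = {{b i, b j} | i j. i < j \<and> j < 4}"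
  proof (intro equalityI subsetI)
    fix e assume "e \<in> {{x, y} | x y. x \<in> X \<and> y \<in> X \<and> x \<noteq> y}"
    then obtain x y where e: "e = {x, y}" "x \<in> X" "y \<in> X" "x \<noteq> y" by blast
    then obtain i j where ij: "x = b i" "y = b j" "i < 4" "j < 4" unfolding X by blast
    then have "i < j \<or> j < i" using e(4) nat_neq_iff by blast
    moreover have "e = {b j, b i}" using e(1) ij by (simp add: insert_commute)
    ultimately show "e \<in> {{b i, b j} | i j. i < j \<and> j < 4}"
      using e(1) ij by blast
  next
    fix e assume "e \<in> {{b i, b j} | i j. i < j \<and> j < 4}"
    then obtain i j where "e = {b i, b j}" "i < j" "j < 4" by blast
    moreover have "b i \<in> X" "b j \<in> X" "b i \<noteq> b j"
      using \<open>i < j\<close> \<open>j < 4\<close> b_neq[of i j] unfolding X by auto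
    ultimately show "e \<in> {{x, y} | x y. x \<in> X \<and> y \<in> X \<and> x \<noteq> y}"
      by blast
  qed
  moreover have "\<Union> {path_edges [b i, b j] | i j. i < j \<and> j < 4} = {{b i, b j} | i j. i < j \<and> j < 4}"
  proof -
    have "path_edges [x, y] = {{x, y}}" for x y :: 'a
      unfolding path_edges_def by auto
    then show ?thesis by blast
  qed
  ultimately have edges: "{{x, y} | x y. x \<in> X \<and> y \<in> X \<and> x \<noteq> y} =
      \<Union> {path_edges [b i, b j] | i j. i < j \<and> j < 4}"
    by simp
  show ?thesis
    unfolding is_isk4_def
  proof (intro exI[of _ b] exI[of _ "\<lambda>i j. [b i, b j]"] conjI)
    show "\<forall>i j. i < j \<and> j < 4 \<longrightarrow> distinct [b i, b j] \<and> 2 \<le> length [b i, b j] \<and>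
        hd [b i, b j] = b i \<and> last [b i, b j] = b j \<and> set [b i, b j] \<inter> b ` {..<4} = {b i, b j}"
      using b_neq by auto
    show "\<forall>i j k l. i < j \<and> j < 4 \<and> k < l \<and> l < 4 \<and> (i, j) \<noteq> (k, l) \<longrightarrow>
        set [b i, b j] \<inter> set [b k, b l] \<subseteq> b ` {..<4}"
      by auto
  qed (fact inj vertices edges)+
qed

lemma strong_clique_card_le_3:
  assumes "isk4_wheel_free V \<theta>" "strong_clique V \<theta> C"
  shows "card C \<le> 3"
proof (rule ccontr)
  assume "\<not> card C \<le> 3"
  then have "4 \<le> card C" by simp
  then obtain X where "X \<subseteq> C" "card X = 4" by (rule obtain_subset_with_card_n)
  have clique: "strong_clique V \<theta> X"
    using assms(2) \<open>X \<subseteq> C\<close> unfolding strong_clique_def by blast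
  have "is_isk4 X (induced_edges (full_realization V \<theta>) X)"
    unfolding induced_edges_full_realization_strong_clique[OF clique]
    using \<open>card X = 4\<close> by (rule complete_graph_is_isk4)
  moreover have "X \<subseteq> V" using clique unfolding strong_clique_def by simp
  ultimately show False
    using assms(1) realization_full_realization[of V \<theta>] unfolding isk4_wheel_free_def by blast
qed

lemma clique_cutset_imp_good_cut_partition:
  assumes "trigraph V \<theta>" "isk4_wheel_free V \<theta>" "clique_cutset V \<theta> C"
  shows "\<exists>A B. good_cut_partition V \<theta> A B C"
proof -
  have clique: "strong_clique V \<theta> C" and "\<not> connected_sub \<theta> (V - C)"
    using assms(3) unfolding clique_cutset_def by auto
  then obtain u w where "u \<in> V - C" "w \<in> V - C" "\<not> (adjacent_within \<theta> (V - C))\<^sup>*\<^sup>* u w"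
    unfolding connected_sub_iff by blast
  moreover have "C \<subseteq> V" using clique unfolding strong_clique_def by simp
  ultimately have "cut_partition V \<theta> (component \<theta> (V - C) u) (V - C - component \<theta> (V - C) u) C"
    using component_cut_partition[OF assms(1)] by blast
  then show ?thesis
    using good_cut_partition_of_clique clique strong_clique_card_le_3[OF assms(2) clique] by blast
qed

lemma component_attached_or_good_cut_partition:
  assumes "trigraph V \<theta>" "a \<in> V" "b \<in> V" "a \<noteq> b" "u \<in> V - {a, b}"
  obtains "\<exists>A B C. good_cut_partition V \<theta> A B C"
    | x y where "x \<in> component \<theta> (V - {a, b}) u" "y \<in> component \<theta> (V - {a, b}) u"
      "adjacent \<theta> a x" "adjacent \<theta> b y"
proof -
  have swap: "V - {b, a} = V - {a, b}" by auto
  consider "\<forall>x\<in>component \<theta> (V - {a, b}) u. \<not> adjacent \<theta> a x"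
    | "\<forall>y\<in>component \<theta> (V - {a, b}) u. \<not> adjacent \<theta> b y"
    | x y where "x \<in> component \<theta> (V - {a, b}) u" "y \<in> component \<theta> (V - {a, b}) u"
      "adjacent \<theta> a x" "adjacent \<theta> b y"
    by blast
  then show thesis
  proof cases
    case 1
    then show thesis using good_cut_partition_of_unattached_component[OF assms] that(1) by blast
  next
    case 2
    then show thesis
      using good_cut_partition_of_unattached_component[OF assms(1,3,2) assms(4)[symmetric]] assms(5)
        that(1) unfolding swap by blast
  next
    case 3
    then show thesis by (rule that(2))
  qed
qed

lemma stable_2cutset_imp_good_cut_partition:
  assumes "trigraph V \<theta>" "stable_2cutset V \<theta> C"
  shows "\<exists>A B C. good_cut_partition V \<theta> A B C"
proof (rule ccontr)
  assume no_good: "\<not> (\<exists>A B C. good_cut_partition V \<theta> A B C)"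
  obtain a b where C: "C = {a, b}" "a \<noteq> b"
    using assms(2) unfolding stable_2cutset_def by (meson card_2_iff)
  have "C \<subseteq> V" using assms(2) unfolding stable_2cutset_def stable_set_def by simp
  then have ab: "a \<in> V" "b \<in> V" using C by auto
  obtain u w where uw: "u \<in> V - C" "w \<in> V - C"
    and disconnected: "\<not> (adjacent_within \<theta> (V - C))\<^sup>*\<^sup>* u w"
    using assms(2) unfolding stable_2cutset_def connected_sub_iff by blast
  define D where "D = component \<theta> (V - C) u"
  define D' where "D' = component \<theta> (V - C) w"
  obtain x y where xy: "x \<in> D" "y \<in> D" "adjacent \<theta> a x" "adjacent \<theta> b y"
    using component_attached_or_good_cut_partition[OF assms(1) ab C(2), of u] uw(1) no_good
    unfolding D_def C(1) by blast
  obtain x' y' where xy': "x' \<in> D'" "y' \<in> D'" "adjacent \<theta> a x'" "adjacent \<theta> b y'"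
    using component_attached_or_good_cut_partition[OF assms(1) ab C(2), of w] uw(2) no_good
    unfolding D'_def C(1) by blast
  have cut: "cut_partition V \<theta> D (V - C - D) C"
    unfolding D_def using component_cut_partition[OF assms(1) \<open>C \<subseteq> V\<close> uw disconnected] .
  have "D' \<subseteq> V - C"
    unfolding D'_def using uw(2) by (rule component_subset)
  moreover have "D \<inter> D' = {}"
    unfolding D_def D'_def using disconnected by (rule components_disjoint)
  ultimately have D'_side: "D' \<subseteq> V - C - D" by blast
  have "connected_sub \<theta> D" "connected_sub \<theta> D'"
    unfolding D_def D'_def by (rule connected_component)+
  have "(adjacent_within \<theta> (D \<union> C))\<^sup>*\<^sup>* a b"
    by (rule connected_sub_link[OF \<open>connected_sub \<theta> D\<close> _ _ _ xy]) (use C(1) in auto)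
  moreover have "(adjacent_within \<theta> (V - C - D \<union> C))\<^sup>*\<^sup>* a b"
    by (rule connected_sub_link[OF \<open>connected_sub \<theta> D'\<close> _ _ _ xy']) (use C(1) D'_side in auto)
  ultimately have "narrow_path \<theta> (D \<union> C) a b" "narrow_path \<theta> (V - C - D \<union> C) a b"
    using C(1) by (auto intro: rtranclp_adjacent_within_imp_narrow_path)
  then have "good_cut_partition V \<theta> D (V - C - D) C"
    unfolding good_cut_partition_def using cut assms(2) C(1) by blast
  then show False using no_good by blast
qed

theorem proposition4p2:
  fixes V :: "'a set" and \<theta> :: "'a set \<Rightarrow> int"
  assumes "trigraph V \<theta>" and "isk4_wheel_free V \<theta>"
  shows "((\<exists>C. clique_cutset V \<theta> C) \<or> (\<exists>C. stable_2cutset V \<theta> C)) \<longleftrightarrow>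
         (\<exists>A B C. good_cut_partition V \<theta> A B C)"
proof
  assume "(\<exists>C. clique_cutset V \<theta> C) \<or> (\<exists>C. stable_2cutset V \<theta> C)"
  then show "\<exists>A B C. good_cut_partition V \<theta> A B C"
    using clique_cutset_imp_good_cut_partition[OF assms] stable_2cutset_imp_good_cut_partition[OF assms(1)]
    by blast
next
  assume "\<exists>A B C. good_cut_partition V \<theta> A B C"
  then show "(\<exists>C. clique_cutset V \<theta> C) \<or> (\<exists>C. stable_2cutset V \<theta> C)"
    unfolding good_cut_partition_def by blast
qed

end
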